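(* Let $\Omega$ be a finite set, $K\ge1$, let $q$ be a probability distribution on $\Omega$ and let $p(x_1,\ldots,x_K)$ be a probability distribution on $\Omega^K$. Let $(X_1,\ldots,X_K)\sim p$ and $\mathcal{S}=\{X_1,\ldots,X_K\}$. Let $P^\star(\mathrm{acc})$ denote the supremum of $\Pr(Z\in\mathcal{S})$ over all valid token-level selection rules with output $Z$. Then $$P^\star(\mathrm{acc})=\max_{\{\beta_y(x_{1:K})\}}\ \sum_{y\in\Omega}\min\Big(q(y),\ \sum_{x_1,\ldots,x_K\in\Omega}\beta_y(x_{1:K})\,p(x_{1:K})\Big),$$ where the maximum is over all families $\beta_y(x_{1:K})$, $y\in\Omega$, $x_{1:K}\in\Omega^K$, with $0\le\beta_y(x_{1:K})\le1$, $\sum_{y\in\Omega}\beta_y(x_{1:K})=1$ for every $x_{1:K}\in\Omega^K$, and $\beta_y(x_{1:K})=0$ whenever $y\notin\{x_1,\ldots,x_K\}$. Moreover, if $\{\beta^\star_y(x_{1:K})\}$ attains the maximum, then $P^\star(\mathrm{acc})$ is attained by the two-step rule: first output an intermediate token $Y$ with $\Pr(Y=y\mid X_{1:K}=x_{1:K})=\beta^\star_y(x_{1:K})$; then apply single-draft speculative sampling to $Y$ with target $q$ to produce $Z$.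
   Context: A token-level selection rule is a conditional distribution $\mathcal{P}(\cdot\mid X_{1:K})$ on $\Omega$; it is valid if its output $Z$ satisfies $\Pr(Z=z)=\sum_{x_{1:K}}\mathcal{P}(z\mid x_{1:K})p(x_{1:K})=q(z)$ for all $z\in\Omega$. Single-draft speculative sampling of a token $Y$ with distribution $p_I$ against target $q$: with probability $\min(1,q(Y)/p_I(Y))$ output $Z=Y$; otherwise output $Z$ drawn from $p^{\mathrm{res}}(x)=\frac{q(x)-\min(p_I(x),q(x))}{1-\sum_{x'}\min(p_I(x'),q(x'))}$. Its output has distribution $q$. *)

theory Defs
  imports Complex_Main
begin

text \<open>Omega is a finite type 'a; tuples x_{1:K} are lists of length K.\<close>

definition tuples :: "nat \<Rightarrow> 'a list set" where
  "tuples K = {xs. length xs = K}"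

definition is_pmf_on :: "'b set \<Rightarrow> ('b \<Rightarrow> real) \<Rightarrow> bool" where
  "is_pmf_on A f \<longleftrightarrow> (\<forall>x\<in>A. 0 \<le> f x) \<and> sum f A = 1"

text \<open>A token-level selection rule: a conditional distribution P(z | x_{1:K}) on Omega.\<close>
definition selection_rule :: "nat \<Rightarrow> ('a::finite list \<Rightarrow> 'a \<Rightarrow> real) \<Rightarrow> bool" where
  "selection_rule K P \<longleftrightarrow> (\<forall>xs\<in>tuples K. is_pmf_on UNIV (P xs))"

definition valid_rule :: "nat \<Rightarrow> ('a::finite list \<Rightarrow> real) \<Rightarrow> ('a \<Rightarrow> real)
    \<Rightarrow> ('a list \<Rightarrow> 'a \<Rightarrow> real) \<Rightarrow> bool" where
  "valid_rule K p q P \<longleftrightarrow> selection_rule K P \<and>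
     (\<forall>z. (\<Sum>xs\<in>tuples K. P xs z * p xs) = q z)"

definition acc_prob :: "nat \<Rightarrow> ('a::finite list \<Rightarrow> real) \<Rightarrow> ('a list \<Rightarrow> 'a \<Rightarrow> real) \<Rightarrow> real" where
  "acc_prob K p P = (\<Sum>xs\<in>tuples K. p xs * (\<Sum>z\<in>set xs. P xs z))"

definition P_star :: "nat \<Rightarrow> ('a::finite list \<Rightarrow> real) \<Rightarrow> ('a \<Rightarrow> real) \<Rightarrow> real" where
  "P_star K p q = Sup {acc_prob K p P | P. valid_rule K p q P}"

definition feasible_beta :: "nat \<Rightarrow> ('a::finite \<Rightarrow> 'a list \<Rightarrow> real) \<Rightarrow> bool" where
  "feasible_beta K \<beta> \<longleftrightarrow> (\<forall>xs\<in>tuples K.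
      (\<forall>y. 0 \<le> \<beta> y xs \<and> \<beta> y xs \<le> 1) \<and> (\<Sum>y\<in>UNIV. \<beta> y xs) = 1 \<and>
      (\<forall>y. y \<notin> set xs \<longrightarrow> \<beta> y xs = 0))"

definition beta_obj :: "nat \<Rightarrow> ('a::finite list \<Rightarrow> real) \<Rightarrow> ('a \<Rightarrow> real)
    \<Rightarrow> ('a \<Rightarrow> 'a list \<Rightarrow> real) \<Rightarrow> real" where
  "beta_obj K p q \<beta> = (\<Sum>y\<in>UNIV. min (q y) (\<Sum>xs\<in>tuples K. \<beta> y xs * p xs))"

text \<open>Single-draft speculative sampling of Y ~ pI against target q.
  Acceptance probability min(1, q(y)/pI(y)); convention: 1 if pI(y) = 0
  (such y never occurs as Y).\<close>
definition spec_accept :: "('a \<Rightarrow> real) \<Rightarrow> ('a \<Rightarrow> real) \<Rightarrow> 'a \<Rightarrow> real" where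
  "spec_accept pI q y = (if pI y = 0 then 1 else min 1 (q y / pI y))"

definition spec_residual :: "('a::finite \<Rightarrow> real) \<Rightarrow> ('a \<Rightarrow> real) \<Rightarrow> 'a \<Rightarrow> real" where
  "spec_residual pI q x =
     (q x - min (pI x) (q x)) / (1 - (\<Sum>x'\<in>UNIV. min (pI x') (q x')))"

definition spec_kernel :: "('a::finite \<Rightarrow> real) \<Rightarrow> ('a \<Rightarrow> real) \<Rightarrow> 'a \<Rightarrow> 'a \<Rightarrow> real" where
  "spec_kernel pI q y z =
     (if z = y then spec_accept pI q y else 0) + (1 - spec_accept pI q y) * spec_residual pI q z"

text \<open>The two-step rule: Y with Pr(Y=y | x) = beta_y(x), then speculative sampling of Y
  (whose marginal is pI(y) = sum_x beta_y(x) p(x)) against q.\<close>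
definition two_step_rule :: "nat \<Rightarrow> ('a::finite list \<Rightarrow> real) \<Rightarrow> ('a \<Rightarrow> real)
    \<Rightarrow> ('a \<Rightarrow> 'a list \<Rightarrow> real) \<Rightarrow> 'a list \<Rightarrow> 'a \<Rightarrow> real" where
  "two_step_rule K p q \<beta> xs z =
     (\<Sum>y\<in>UNIV. \<beta> y xs * spec_kernel (\<lambda>y'. \<Sum>xs'\<in>tuples K. \<beta> y' xs' * p xs') q y z)"

end

theory Submission
  imports Defs "HOL-Analysis.Analysis"
begin

text \<open>A valid rule P gives a feasible \<open>\<beta>\<close>: keep P(y | x) on the drafts and move the
  remaining mass to the first draft. The mass with which Z = y lands in the draft set is then
  bounded both by q(y) (validity) and by the \<open>\<beta>\<close>-marginal of y, so Pr(Z \<in> S) is at most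
  the objective. Conversely, speculative sampling of an intermediate token Y with marginal
  pI keeps Y = y with probability min(pI(y), q(y)), so the two-step rule is valid and
  reaches the objective. A maximiser exists because the objective is continuous on the set of
  feasible \<open>\<beta>\<close>, which is compact in the product topology once \<open>\<beta>\<close> is set to 0 off the
  tuples of length K.\<close>

lemma finite_tuples [simp]: "finite (tuples K :: 'a::finite list set)"
proof -
  have "tuples K = {xs::'a list. set xs \<subseteq> UNIV \<and> length xs = K}"
    by (auto simp: tuples_def)
  then show ?thesis
    using finite_lists_length_eq[of "UNIV::'a set" K] by simp
qed

lemma hd_in_set_tuples: "K \<ge> 1 \<Longrightarrow> xs \<in> tuples K \<Longrightarrow> hd xs \<in> set xs"
  by (cases xs) (auto simp: tuples_def)

section \<open>Single-draft speculative sampling\<close>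

lemma spec_accept_nonneg: "0 \<le> pI y \<Longrightarrow> 0 \<le> q y \<Longrightarrow> 0 \<le> spec_accept pI q y"
  by (simp add: spec_accept_def)

lemma spec_accept_le_1: "spec_accept pI q y \<le> 1"
  by (simp add: spec_accept_def)

lemma mult_spec_accept:
  assumes "0 \<le> pI y" "0 \<le> q y"
  shows "pI y * spec_accept pI q y = min (pI y) (q y)"
  using assms by (cases "pI y = 0") (simp_all add: spec_accept_def min_mult_distrib_left)

context
  fixes pI q :: "'a::finite \<Rightarrow> real"
  assumes pI: "is_pmf_on UNIV pI" and q: "is_pmf_on UNIV q"
begin

private abbreviation overlap :: real where
  "overlap \<equiv> \<Sum>x\<in>UNIV. min (pI x) (q x)"

private lemma sum_minus_overlap:
  "(\<Sum>z\<in>UNIV. pI z - min (pI z) (q z)) = 1 - overlap"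
  "(\<Sum>z\<in>UNIV. q z - min (pI z) (q z)) = 1 - overlap"
  using pI q by (simp_all add: is_pmf_on_def sum_subtractf)

private lemma overlap_le_1: "overlap \<le> 1"
proof -
  have "0 \<le> (\<Sum>z\<in>UNIV. q z - min (pI z) (q z))"
    by (intro sum_nonneg) simp
  then show ?thesis
    using sum_minus_overlap(2) by simp
qed

lemma spec_residual_nonneg: "0 \<le> spec_residual pI q z"
  unfolding spec_residual_def using overlap_le_1 by simp

lemma mult_spec_residual:
  "(1 - overlap) * spec_residual pI q z = q z - min (pI z) (q z)"
proof (cases "overlap = 1")
  case True
  then have "\<forall>z\<in>UNIV. q z - min (pI z) (q z) = 0"
    using sum_minus_overlap(2) by (subst sum_nonneg_eq_0_iff[symmetric]) auto
  then show ?thesis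
    by (simp only: True UNIV_I diff_self mult_zero_left)
qed (simp add: spec_residual_def)

text \<open>With full overlap the residual is 0/0 = 0, which is harmless only because every draft
  is then accepted.\<close>
lemma spec_accept_eq_1_if_full_overlap:
  assumes "overlap = 1"
  shows "spec_accept pI q y = 1"
proof -
  have "\<forall>z\<in>UNIV. pI z - min (pI z) (q z) = 0"
    using sum_minus_overlap(1) assms by (subst sum_nonneg_eq_0_iff[symmetric]) auto
  then have "pI y \<le> q y"
    by (metis UNIV_I eq_iff_diff_eq_0 min.absorb_iff1)
  moreover have "0 \<le> pI y"
    using pI by (simp add: is_pmf_on_def)
  ultimately show ?thesis
  proof (cases "pI y = 0")
    case False
    with \<open>0 \<le> pI y\<close> \<open>pI y \<le> q y\<close> have "1 \<le> q y / pI y"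
      by simp
    with False show ?thesis
      by (simp add: spec_accept_def)
  qed (simp add: spec_accept_def)
qed

lemma spec_kernel_pmf: "is_pmf_on UNIV (spec_kernel pI q y)"
proof -
  have "(\<Sum>z\<in>UNIV. spec_kernel pI q y z) =
      spec_accept pI q y + (1 - spec_accept pI q y) * (\<Sum>z\<in>UNIV. spec_residual pI q z)"
    by (simp add: spec_kernel_def sum.distrib sum_distrib_left)
  also have "\<dots> = 1"
  proof (cases "overlap = 1")
    case False
    then have "(\<Sum>z\<in>UNIV. spec_residual pI q z) = 1"
      using sum_minus_overlap(2)
      by (simp add: spec_residual_def sum_divide_distrib[symmetric])
    then show ?thesis by simp
  qed (simp add: spec_accept_eq_1_if_full_overlap)
  finally show ?thesis
    using pI q spec_accept_le_1[of pI q y] spec_accept_nonneg[of pI y q] spec_residual_nonneg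
    by (auto simp: is_pmf_on_def spec_kernel_def)
qed

lemma spec_kernel_marginal: "(\<Sum>y\<in>UNIV. pI y * spec_kernel pI q y z) = q z"
proof -
  have acc: "pI y * spec_accept pI q y = min (pI y) (q y)" for y
    using pI q by (simp add: is_pmf_on_def mult_spec_accept)
  have "(\<Sum>y\<in>UNIV. pI y * spec_kernel pI q y z) =
      (\<Sum>y\<in>UNIV. (if z = y then pI y * spec_accept pI q y else 0)
                 + spec_residual pI q z * (pI y - pI y * spec_accept pI q y))"
    by (intro sum.cong) (auto simp: spec_kernel_def algebra_simps)
  also have "\<dots> = min (pI z) (q z) + (1 - overlap) * spec_residual pI q z"
    by (simp add: sum.distrib flip: sum_distrib_left) (simp add: acc sum_minus_overlap(1))
  also have "\<dots> = q z"
    by (simp add: mult_spec_residual)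
  finally show ?thesis .
qed

lemma spec_accept_le_spec_kernel: "spec_accept pI q y \<le> spec_kernel pI q y y"
  using spec_accept_le_1[of pI q y] spec_residual_nonneg[of y]
  by (simp add: spec_kernel_def)

end

section \<open>The two-step rule\<close>

definition intermediate_marginal :: "nat \<Rightarrow> ('a list \<Rightarrow> real) \<Rightarrow> ('a \<Rightarrow> 'a list \<Rightarrow> real)
    \<Rightarrow> 'a \<Rightarrow> real" where
  "intermediate_marginal K p \<beta> y = (\<Sum>xs\<in>tuples K. \<beta> y xs * p xs)"

lemma two_step_rule_eq:
  "two_step_rule K p q \<beta> xs z = (\<Sum>y\<in>UNIV. \<beta> y xs * spec_kernel (intermediate_marginal K p \<beta>) q y z)"
  unfolding two_step_rule_def intermediate_marginal_def ..

lemma beta_obj_eq: "beta_obj K p q \<beta> = (\<Sum>y\<in>UNIV. min (intermediate_marginal K p \<beta> y) (q y))"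
  unfolding beta_obj_def intermediate_marginal_def by (simp add: min.commute)

lemma intermediate_marginal_pmf:
  assumes "is_pmf_on (tuples K) p" and "feasible_beta K \<beta>"
  shows "is_pmf_on UNIV (intermediate_marginal K p \<beta>)"
proof -
  have "(\<Sum>y\<in>UNIV. intermediate_marginal K p \<beta> y) = (\<Sum>xs\<in>tuples K. (\<Sum>y\<in>UNIV. \<beta> y xs) * p xs)"
    unfolding intermediate_marginal_def sum_distrib_right by (rule sum.swap)
  also have "\<dots> = 1"
    using assms by (simp add: is_pmf_on_def feasible_beta_def)
  finally show ?thesis
    using assms unfolding is_pmf_on_def feasible_beta_def intermediate_marginal_def
    by (auto intro!: sum_nonneg)
qed

context
  fixes K :: nat and p :: "'a::finite list \<Rightarrow> real" and q :: "'a \<Rightarrow> real"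
    and \<beta> :: "'a \<Rightarrow> 'a list \<Rightarrow> real"
  assumes p: "is_pmf_on (tuples K) p" and q: "is_pmf_on UNIV q"
    and \<beta>: "feasible_beta K \<beta>"
begin

private abbreviation pI where "pI \<equiv> intermediate_marginal K p \<beta>"

private lemma pI_pmf: "is_pmf_on UNIV pI"
  using p \<beta> by (rule intermediate_marginal_pmf)

private lemma beta_nonneg: "xs \<in> tuples K \<Longrightarrow> 0 \<le> \<beta> y xs"
  using \<beta> by (simp add: feasible_beta_def)

lemma two_step_rule_valid: "valid_rule K p q (two_step_rule K p q \<beta>)"
  unfolding valid_rule_def selection_rule_def
proof (intro conjI ballI allI)
  fix xs :: "'a list" assume xs: "xs \<in> tuples K"
  have "(\<Sum>z\<in>UNIV. two_step_rule K p q \<beta> xs z) = (\<Sum>y\<in>UNIV. \<beta> y xs * (\<Sum>z\<in>UNIV. spec_kernel pI q y z))"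
    unfolding two_step_rule_eq sum_distrib_left by (rule sum.swap)
  also have "\<dots> = 1"
    using spec_kernel_pmf[OF pI_pmf q] \<beta> xs by (simp add: is_pmf_on_def feasible_beta_def)
  finally show "is_pmf_on UNIV (two_step_rule K p q \<beta> xs)"
    using spec_kernel_pmf[OF pI_pmf q] beta_nonneg[OF xs]
    by (auto simp: is_pmf_on_def two_step_rule_eq intro!: sum_nonneg)
next
  fix z
  have "(\<Sum>xs\<in>tuples K. two_step_rule K p q \<beta> xs z * p xs) = (\<Sum>y\<in>UNIV. pI y * spec_kernel pI q y z)"
    unfolding two_step_rule_eq intermediate_marginal_def sum_distrib_right
    by (subst sum.swap) (simp add: mult_ac)
  also have "\<dots> = q z"
    using pI_pmf q by (rule spec_kernel_marginal)
  finally show "(\<Sum>xs\<in>tuples K. two_step_rule K p q \<beta> xs z * p xs) = q z" .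
qed

lemma beta_obj_le_acc_prob_two_step_rule:
  "beta_obj K p q \<beta> \<le> acc_prob K p (two_step_rule K p q \<beta>)"
proof -
  let ?a = "spec_accept pI q"
  have accepted_le: "\<beta> z xs * ?a z \<le> two_step_rule K p q \<beta> xs z" if xs: "xs \<in> tuples K" for xs z
  proof -
    have "\<beta> z xs * ?a z \<le> \<beta> z xs * spec_kernel pI q z z"
      using spec_accept_le_spec_kernel[OF pI_pmf q] beta_nonneg[OF xs] by (rule mult_left_mono)
    also have "\<dots> \<le> two_step_rule K p q \<beta> xs z"
      unfolding two_step_rule_eq using spec_kernel_pmf[OF pI_pmf q] beta_nonneg[OF xs]
      by (intro member_le_sum) (auto simp: is_pmf_on_def)
    finally show ?thesis .
  qed
  have "beta_obj K p q \<beta> = (\<Sum>z\<in>UNIV. pI z * ?a z)"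
    using pI_pmf q by (simp add: beta_obj_eq mult_spec_accept is_pmf_on_def)
  also have "\<dots> = (\<Sum>xs\<in>tuples K. p xs * (\<Sum>z\<in>UNIV. \<beta> z xs * ?a z))"
    unfolding intermediate_marginal_def sum_distrib_left sum_distrib_right
    by (subst sum.swap) (simp add: mult_ac)
  also have "\<dots> = (\<Sum>xs\<in>tuples K. p xs * (\<Sum>z\<in>set xs. \<beta> z xs * ?a z))"
    using \<beta> by (intro sum.cong refl arg_cong[where f="(*) _"] sum.mono_neutral_right)
      (auto simp: feasible_beta_def)
  also have "\<dots> \<le> acc_prob K p (two_step_rule K p q \<beta>)"
    unfolding acc_prob_def using p accepted_le
    by (intro sum_mono mult_left_mono) (auto simp: is_pmf_on_def)
  finally show ?thesis .
qed

end

section \<open>Upper bound for valid rules\<close>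

definition beta_of_rule :: "('a list \<Rightarrow> 'a \<Rightarrow> real) \<Rightarrow> 'a \<Rightarrow> 'a list \<Rightarrow> real" where
  "beta_of_rule P y xs =
     (if y \<in> set xs then P xs y else 0) + (if y = hd xs then 1 - (\<Sum>z\<in>set xs. P xs z) else 0)"

lemma is_pmf_on_sum_le_1:
  assumes "is_pmf_on UNIV (f :: 'a::finite \<Rightarrow> real)"
  shows "sum f A \<le> 1"
proof -
  have "sum f A \<le> sum f UNIV"
    using assms by (intro sum_mono2) (auto simp: is_pmf_on_def)
  then show ?thesis
    using assms by (simp add: is_pmf_on_def)
qed

lemma feasible_beta_of_rule:
  assumes K: "K \<ge> 1" and P: "selection_rule K P"
  shows "feasible_beta K (beta_of_rule P)"
  unfolding feasible_beta_def
proof (intro ballI conjI allI impI)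
  fix xs :: "'a list" and y assume xs: "xs \<in> tuples K"
  have pmf: "is_pmf_on UNIV (P xs)"
    using P xs by (simp add: selection_rule_def)
  have hd: "hd xs \<in> set xs"
    using K xs by (rule hd_in_set_tuples)
  have le_mass: "P xs y \<le> (\<Sum>z\<in>set xs. P xs z)" if "y \<in> set xs"
    using pmf that by (intro member_le_sum) (auto simp: is_pmf_on_def)
  show "0 \<le> beta_of_rule P y xs"
    using pmf is_pmf_on_sum_le_1[OF pmf] by (auto simp: beta_of_rule_def is_pmf_on_def)
  show "beta_of_rule P y xs \<le> 1"
    using pmf is_pmf_on_sum_le_1[OF pmf] le_mass hd
    by (auto simp: beta_of_rule_def is_pmf_on_def intro: order_trans)
  show "y \<notin> set xs \<Longrightarrow> beta_of_rule P y xs = 0"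
    using hd by (auto simp: beta_of_rule_def)
  show "(\<Sum>y\<in>UNIV. beta_of_rule P y xs) = 1"
    using hd by (simp add: beta_of_rule_def sum.distrib sum.If_cases Int_absorb1)
qed

lemma acc_prob_le_beta_obj_of_rule:
  assumes P: "valid_rule K p q P" and p: "\<And>xs. xs \<in> tuples K \<Longrightarrow> 0 \<le> p xs"
  shows "acc_prob K p P \<le> beta_obj K p q (beta_of_rule P)"
proof -
  define accepted where
    "accepted y = (\<Sum>xs\<in>tuples K. (if y \<in> set xs then P xs y else 0) * p xs)" for y
  have P_nonneg: "xs \<in> tuples K \<Longrightarrow> 0 \<le> P xs y" for xs y
    using P by (simp add: valid_rule_def selection_rule_def is_pmf_on_def)
  have mass_le_1: "xs \<in> tuples K \<Longrightarrow> (\<Sum>z\<in>set xs. P xs z) \<le> 1" for xs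
    using P by (simp add: valid_rule_def selection_rule_def is_pmf_on_sum_le_1)
  have "accepted y \<le> (\<Sum>xs\<in>tuples K. P xs y * p xs)" for y
    unfolding accepted_def using P_nonneg p by (intro sum_mono) auto
  then have le_q: "accepted y \<le> q y" for y
    using P by (simp add: valid_rule_def)
  have le_marginal: "accepted y \<le> (\<Sum>xs\<in>tuples K. beta_of_rule P y xs * p xs)" for y
    unfolding accepted_def beta_of_rule_def
    using P_nonneg p mass_le_1 by (intro sum_mono mult_right_mono) auto
  have "acc_prob K p P = (\<Sum>xs\<in>tuples K. p xs * (\<Sum>y\<in>UNIV. if y \<in> set xs then P xs y else 0))"
    unfolding acc_prob_def by (simp add: sum.If_cases Int_absorb1)
  also have "\<dots> = (\<Sum>y\<in>UNIV. accepted y)"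
    unfolding accepted_def sum_distrib_left by (subst sum.swap) (simp add: mult.commute)
  also have "\<dots> \<le> beta_obj K p q (beta_of_rule P)"
    unfolding beta_obj_def using le_q le_marginal by (intro sum_mono) simp
  finally show ?thesis .
qed

section \<open>Existence of an optimal \<open>\<beta>\<close>\<close>

lemma compact_PiE_UNIV:
  fixes S :: "'i \<Rightarrow> 'b::topological_space set"
  assumes "\<And>i. compact (S i)"
  shows "compact (Pi\<^sub>E UNIV S)"
proof -
  have "compactin (product_topology (\<lambda>i. euclidean) UNIV) (Pi\<^sub>E UNIV S)"
    using assms by (simp add: compactin_PiE)
  then show ?thesis
    by (simp add: euclidean_product_topology)
qed

lemma continuous_on_eval2: "continuous_on A (\<lambda>f::'a \<Rightarrow> 'b \<Rightarrow> 'c::topological_space. f y x)"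
  by (rule continuous_on_product_then_coordinatewise
        [OF continuous_on_subset[OF continuous_on_product_coordinates subset_UNIV]])

lemma closed_feasible_beta: "closed {\<beta>. feasible_beta K \<beta>}"
  unfolding feasible_beta_def Ball_def
  by (intro closed_Collect_all closed_Collect_imp[OF open_Collect_const] closed_Collect_conj
      closed_Collect_le closed_Collect_eq continuous_on_sum continuous_on_eval2 continuous_on_const)

lemma continuous_on_beta_obj: "continuous_on A (beta_obj K p q)"
  unfolding beta_obj_def
  by (intro continuous_on_sum continuous_on_min continuous_on_mult continuous_on_eval2
      continuous_on_const)

lemma beta_obj_attains_max:
  fixes p :: "'a::finite list \<Rightarrow> real" and q :: "'a \<Rightarrow> real"
  assumes "K \<ge> 1"
  obtains \<beta> where "feasible_beta K \<beta>"
    and "\<And>\<beta>'. feasible_beta K \<beta>' \<Longrightarrow> beta_obj K p q \<beta>' \<le> beta_obj K p q \<beta>"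
proof -
  define zero_off where "zero_off \<beta> = (\<lambda>y xs. if xs \<in> tuples K then \<beta> y xs else 0)"
    for \<beta> :: "'a \<Rightarrow> 'a list \<Rightarrow> real"
  define box where "box = Pi\<^sub>E UNIV (\<lambda>y::'a. Pi\<^sub>E UNIV (\<lambda>xs::'a list.
      if xs \<in> tuples K then {0..1::real} else {0}))"
  define F where "F = box \<inter> {\<beta>. feasible_beta K \<beta>}"
  have zero_off_F: "zero_off \<beta> \<in> F" if "feasible_beta K \<beta>" for \<beta>
    using that by (auto simp: F_def box_def zero_off_def feasible_beta_def)
  have obj_zero_off: "beta_obj K p q (zero_off \<beta>) = beta_obj K p q \<beta>" for \<beta>
    unfolding beta_obj_def zero_off_def by (intro sum.cong refl arg_cong2[where f=min]) auto
  have "compact F"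
    unfolding F_def box_def by (intro compact_Int_closed compact_PiE_UNIV closed_feasible_beta) auto
  moreover have "F \<noteq> {}"
  proof -
    have "selection_rule K (\<lambda>xs y. if y = hd xs then 1 else 0)"
      by (simp add: selection_rule_def is_pmf_on_def)
    then have "feasible_beta K (beta_of_rule (\<lambda>xs y. if y = hd xs then 1 else 0))"
      using assms by (rule feasible_beta_of_rule[rotated])
    then show ?thesis
      using zero_off_F by blast
  qed
  ultimately obtain \<beta> where "\<beta> \<in> F" and max: "\<forall>\<beta>'\<in>F. beta_obj K p q \<beta>' \<le> beta_obj K p q \<beta>"
    using continuous_attains_sup[OF _ _ continuous_on_beta_obj] by blast
  show ?thesis
  proof (rule that)
    show "feasible_beta K \<beta>"
      using \<open>\<beta> \<in> F\<close> by (simp add: F_def)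
  next
    fix \<beta>' :: "'a \<Rightarrow> 'a list \<Rightarrow> real"
    assume "feasible_beta K \<beta>'"
    then have "beta_obj K p q (zero_off \<beta>') \<le> beta_obj K p q \<beta>"
      using max zero_off_F by blast
    then show "beta_obj K p q \<beta>' \<le> beta_obj K p q \<beta>"
      by (simp only: obj_zero_off)
  qed
qed

lemma P_star_eq_optimal_beta_obj:
  assumes K: "K \<ge> 1" and q: "is_pmf_on UNIV q" and p: "is_pmf_on (tuples K) p"
    and \<beta>: "feasible_beta K \<beta>"
    and max: "\<And>\<beta>'. feasible_beta K \<beta>' \<Longrightarrow> beta_obj K p q \<beta>' \<le> beta_obj K p q \<beta>"
  shows "acc_prob K p (two_step_rule K p q \<beta>) = beta_obj K p q \<beta>"
    and "P_star K p q = beta_obj K p q \<beta>"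
proof -
  have upper: "acc_prob K p P \<le> beta_obj K p q \<beta>" if P: "valid_rule K p q P" for P
  proof -
    have "acc_prob K p P \<le> beta_obj K p q (beta_of_rule P)"
      using P p by (simp add: acc_prob_le_beta_obj_of_rule is_pmf_on_def)
    also have "\<dots> \<le> beta_obj K p q \<beta>"
      using P by (simp add: max feasible_beta_of_rule[OF K] valid_rule_def)
    finally show ?thesis .
  qed
  have valid: "valid_rule K p q (two_step_rule K p q \<beta>)"
    using p q \<beta> by (rule two_step_rule_valid)
  show attained: "acc_prob K p (two_step_rule K p q \<beta>) = beta_obj K p q \<beta>"
    using upper[OF valid] beta_obj_le_acc_prob_two_step_rule[OF p q \<beta>] by simp
  show "P_star K p q = beta_obj K p q \<beta>"
    unfolding P_star_def
  proof (rule cSup_eq_maximum)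
    have "acc_prob K p (two_step_rule K p q \<beta>) \<in> {acc_prob K p P |P. valid_rule K p q P}"
      using valid by blast
    then show "beta_obj K p q \<beta> \<in> {acc_prob K p P |P. valid_rule K p q P}"
      by (simp only: attained)
  next
    fix x assume "x \<in> {acc_prob K p P |P. valid_rule K p q P}"
    then show "x \<le> beta_obj K p q \<beta>"
      using upper by blast
  qed
qed

theorem theorem4:
  fixes K :: nat and q :: "'a::finite \<Rightarrow> real" and p :: "'a list \<Rightarrow> real"
  assumes "K \<ge> 1"
    and "is_pmf_on UNIV q"
    and "is_pmf_on (tuples K) p"
  shows "(\<exists>\<beta>. feasible_beta K \<beta> \<and>
            (\<forall>\<beta>'. feasible_beta K \<beta>' \<longrightarrow> beta_obj K p q \<beta>' \<le> beta_obj K p q \<beta>) \<and>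
            P_star K p q = beta_obj K p q \<beta>)
       \<and> (\<forall>\<beta>. feasible_beta K \<beta> \<and>
            (\<forall>\<beta>'. feasible_beta K \<beta>' \<longrightarrow> beta_obj K p q \<beta>' \<le> beta_obj K p q \<beta>) \<longrightarrow>
            valid_rule K p q (two_step_rule K p q \<beta>) \<and>
            acc_prob K p (two_step_rule K p q \<beta>) = P_star K p q)"
proof (intro conjI allI impI; (elim conjE)?)
  obtain \<beta> where "feasible_beta K \<beta>"
    and "\<And>\<beta>'. feasible_beta K \<beta>' \<Longrightarrow> beta_obj K p q \<beta>' \<le> beta_obj K p q \<beta>"
    using beta_obj_attains_max[OF assms(1)] by blast
  then show "\<exists>\<beta>. feasible_beta K \<beta> \<and>
      (\<forall>\<beta>'. feasible_beta K \<beta>' \<longrightarrow> beta_obj K p q \<beta>' \<le> beta_obj K p q \<beta>) \<and>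
      P_star K p q = beta_obj K p q \<beta>"
    using P_star_eq_optimal_beta_obj[OF assms] by blast
next
  fix \<beta> assume "feasible_beta K \<beta>"
    and "\<forall>\<beta>'. feasible_beta K \<beta>' \<longrightarrow> beta_obj K p q \<beta>' \<le> beta_obj K p q \<beta>"
  then show "valid_rule K p q (two_step_rule K p q \<beta>)"
    and "acc_prob K p (two_step_rule K p q \<beta>) = P_star K p q"
    using two_step_rule_valid[OF assms(3,2)] P_star_eq_optimal_beta_obj[OF assms] by simp_all
qed

end
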